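(* Let $(G,g)$ be a five-dimensional semi-Riemannian Lie group with a subgroup $K\cong\mathrm{SU}(2)$ generating a left-invariant conformal foliation $\mathcal F$ on $G$. Let $\mathfrak g=\mathfrak{su}(2)\oplus\mathfrak m$ be the orthogonal decomposition of the Lie algebra of $G$ and let $\{A,B,C,X,Y\}$ be an orthonormal basis for $\mathfrak g$ such that $A,B,C$ generate $\mathfrak{su}(2)$ with $[A,B]=2C$, $[C,A]=2B$, $[B,C]=2A$. In this setting the brackets have the form $[A,X]=-b_{11}B-c_{11}C$, $[A,Y]=-b_{21}B-c_{21}C$, $[B,X]=b_{11}A-c_{12}C$, $[B,Y]=b_{21}A-c_{22}C$, $[C,X]=c_{11}A+c_{12}B$, $[C,Y]=c_{21}A+c_{22}B$ for real numbers $b_{11},b_{21},c_{11},c_{12},c_{21},c_{22}$. Then the foliation $\mathcal F$ is semi-Riemannian and minimal. It is totally geodesic if and only if $$0=(\varepsilon_B-\varepsilon_A)b_{11}=(\varepsilon_B-\varepsilon_A)b_{21}=(\varepsilon_C-\varepsilon_A)c_{11}=(\varepsilon_C-\varepsilon_A)c_{21}=(\varepsilon_C-\varepsilon_B)c_{12}=(\varepsilon_C-\varepsilon_B)c_{22}.$$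
   Context: A semi-Riemannian Lie group $(G,g)$ is a Lie group with a left-invariant non-degenerate metric $g$ of arbitrary signature; its Lie algebra is identified with the left-invariant vector fields. The subgroup $K$ generates the left-invariant foliation $\mathcal F$ by left translates of $K$, with tangent distribution $\mathcal V$ spanned by $\mathfrak{su}(2)$ and orthogonal complement $\mathcal H$ spanned by $\mathfrak m$; $\mathcal V,\mathcal H$ also denote orthogonal projections. Orthonormal means $g(E_i,E_j)=\varepsilon_{E_i}\delta_{ij}$, $\varepsilon_{E_i}=g(E_i,E_i)\in\{\pm1\}$. With $\nabla$ the Levi-Civita connection: $B^{\mathcal H}(E,F)=\tfrac12\mathcal V(\nabla_EF+\nabla_FE)$ ($E,F\in\mathcal H$), $B^{\mathcal V}(E,F)=\tfrac12\mathcal H(\nabla_EF+\nabla_FE)$ ($E,F\in\mathcal V$). $\mathcal F$ is conformal if $B^{\mathcal H}=g\otimes V$ for some vector field $V$ in $\mathcal V$, semi-Riemannian if $B^{\mathcal H}=0$, minimal if $\sum_k\varepsilon_{V_k}B^{\mathcal V}(V_k,V_k)=0$ for an orthonormal basis $\{V_k\}$ of $\mathcal V$, and totally geodesic if $B^{\mathcal V}=0$. *)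

theory Defs
  imports "HOL-Analysis.Analysis"
begin

text \<open>Lie-algebra level model of a left-invariant foliation on a semi-Riemannian
Lie group.  The Lie algebra is a real vector space 'v with bracket br, the
left-invariant metric is a bilinear form g, and nabla is the Levi-Civita
connection restricted to left-invariant vector fields (characterised by the
Koszul formula in the theorem).  Vs / Hs are orthonormal bases of the vertical
and horizontal distributions.\<close>

definition orthonormal_set :: "('v \<Rightarrow> 'v \<Rightarrow> real) \<Rightarrow> 'v set \<Rightarrow> bool" where
  "orthonormal_set g S \<longleftrightarrow>
     (\<forall>u\<in>S. \<forall>v\<in>S. u \<noteq> v \<longrightarrow> g u v = 0) \<and> (\<forall>u\<in>S. g u u = 1 \<or> g u u = -1)"

text \<open>Orthogonal projection onto the span of an orthonormal list es
  (division by g e e is multiplication by the sign epsilon_e).\<close>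
definition oproj :: "('v \<Rightarrow> 'v \<Rightarrow> real) \<Rightarrow> 'v list \<Rightarrow> 'v \<Rightarrow> 'v::real_vector" where
  "oproj g es Z = (\<Sum>e\<leftarrow>es. (g Z e / g e e) *\<^sub>R e)"

definition sff :: "('v \<Rightarrow> 'v \<Rightarrow> real) \<Rightarrow> ('v \<Rightarrow> 'v \<Rightarrow> 'v) \<Rightarrow> 'v list \<Rightarrow> 'v \<Rightarrow> 'v \<Rightarrow> 'v::real_vector" where
  "sff g nabla es E F = (1/2) *\<^sub>R oproj g es (nabla E F + nabla F E)"

text \<open>B^H uses projection onto the vertical span Vs, for E,F horizontal;
  B^V uses projection onto the horizontal span Hs, for E,F vertical.\<close>

definition conformal_fol ::
  "('v::real_vector \<Rightarrow> 'v \<Rightarrow> real) \<Rightarrow> ('v \<Rightarrow> 'v \<Rightarrow> 'v) \<Rightarrow> 'v list \<Rightarrow> 'v list \<Rightarrow> bool" where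
  "conformal_fol g nabla Vs Hs \<longleftrightarrow>
     (\<exists>V\<in>span (set Vs). \<forall>E\<in>span (set Hs). \<forall>F\<in>span (set Hs).
        sff g nabla Vs E F = g E F *\<^sub>R V)"

definition semi_riemannian_fol ::
  "('v::real_vector \<Rightarrow> 'v \<Rightarrow> real) \<Rightarrow> ('v \<Rightarrow> 'v \<Rightarrow> 'v) \<Rightarrow> 'v list \<Rightarrow> 'v list \<Rightarrow> bool" where
  "semi_riemannian_fol g nabla Vs Hs \<longleftrightarrow>
     (\<forall>E\<in>span (set Hs). \<forall>F\<in>span (set Hs). sff g nabla Vs E F = 0)"

definition minimal_fol ::
  "('v::real_vector \<Rightarrow> 'v \<Rightarrow> real) \<Rightarrow> ('v \<Rightarrow> 'v \<Rightarrow> 'v) \<Rightarrow> 'v list \<Rightarrow> 'v list \<Rightarrow> bool" where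
  "minimal_fol g nabla Vs Hs \<longleftrightarrow>
     (\<Sum>e\<leftarrow>Vs. g e e *\<^sub>R sff g nabla Hs e e) = 0"

definition totally_geodesic_fol ::
  "('v::real_vector \<Rightarrow> 'v \<Rightarrow> real) \<Rightarrow> ('v \<Rightarrow> 'v \<Rightarrow> 'v) \<Rightarrow> 'v list \<Rightarrow> 'v list \<Rightarrow> bool" where
  "totally_geodesic_fol g nabla Vs Hs \<longleftrightarrow>
     (\<forall>E\<in>span (set Vs). \<forall>F\<in>span (set Vs). sff g nabla Hs E F = 0)"

end

theory Submission
  imports Defs
begin

(* By the Koszul formula, g(nabla_E F + nabla_F E, Z) = g([Z,E],F) + g([Z,F],E), so a second
   fundamental form is B(E,F) = 1/2 sum_e eps_e S_e(E,F) e, where S_e(E,F) = g([e,E],F) + g([e,F],E)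
   (sym_ad e) is twice the g-symmetric part of ad e and e runs over an orthonormal basis of the normal
   directions. Since S_e is bilinear and the e are g-independent, B vanishes on a span iff every
   S_e vanishes on pairs of spanning vectors. For the given brackets ad A, ad B, ad C map m into
   su(2), so S_e vanishes on m; ad X and ad Y move each of A, B, C into its g-orthogonal
   complement, so S_h(e,e) = 0; and S_X(A,B) = (eps_B - eps_A) b11 and its analogues give the
   totally geodesic criterion. *)

lemma orthonormal_setD:
  assumes "orthonormal_set g S" "u \<in> S"
  shows "g u u \<noteq> 0" and "v \<in> S \<Longrightarrow> u \<noteq> v \<Longrightarrow> g u v = 0"
  using assms unfolding orthonormal_set_def by fastforce+

lemma orthonormal_set_subset: "orthonormal_set g S \<Longrightarrow> T \<subseteq> S \<Longrightarrow> orthonormal_set g T"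
  unfolding orthonormal_set_def by blast

lemma bilinear_zero: "bilinear (\<lambda>x y. 0)"
  by (simp add: bilinear_def linear_zero)

lemma orthonormal_combination_eq_0_iff:
  fixes g :: "'v::real_vector \<Rightarrow> 'v \<Rightarrow> real"
  assumes g: "bilinear g" and on: "orthonormal_set g (set es)" and "distinct es"
  shows "(\<Sum>e\<leftarrow>es. a e *\<^sub>R e) = 0 \<longleftrightarrow> (\<forall>e\<in>set es. a e = 0)"
proof
  assume zero: "(\<Sum>e\<leftarrow>es. a e *\<^sub>R e) = 0"
  show "\<forall>e\<in>set es. a e = 0"
  proof
    fix e' assume e': "e' \<in> set es"
    have lin: "linear (\<lambda>x. g x e')"
      using g by (simp add: bilinear_def)
    have "0 = g (\<Sum>e\<in>set es. a e *\<^sub>R e) e'"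
      using zero g \<open>distinct es\<close> by (simp add: sum_list_distinct_conv_sum_set bilinear_lzero)
    also have "\<dots> = (\<Sum>e\<in>set es. a e * g e e')"
      by (simp add: linear_sum[OF lin] bilinear_lmul[OF g])
    also have "\<dots> = a e' * g e' e'"
      using e' orthonormal_setD(2)[OF on] by (subst sum.remove[OF _ e']) auto
    finally show "a e' = 0"
      using orthonormal_setD(1)[OF on e'] by simp
  qed
qed (simp add: sum_list_distinct_conv_sum_set \<open>distinct es\<close>)

locale levi_civita_algebra =
  fixes br :: "'v::real_vector \<Rightarrow> 'v \<Rightarrow> 'v"
    and g :: "'v \<Rightarrow> 'v \<Rightarrow> real"
    and nabla :: "'v \<Rightarrow> 'v \<Rightarrow> 'v"
  assumes br_bilinear: "bilinear br"
    and br_antisym: "br u v = - br v u"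
    and g_bilinear: "bilinear g"
    and koszul: "2 * g (nabla E F) Z = g (br E F) Z - g (br F Z) E + g (br Z E) F"
begin

definition sym_ad :: "'v \<Rightarrow> 'v \<Rightarrow> 'v \<Rightarrow> real" where
  "sym_ad h E F = g (br h E) F + g (br h F) E"

lemma bilinear_sym_ad: "bilinear (sym_ad h)"
  unfolding bilinear_def linear_iff sym_ad_def
  by (simp add: bilinear_ladd[OF g_bilinear] bilinear_radd[OF g_bilinear]
      bilinear_lmul[OF g_bilinear] bilinear_rmul[OF g_bilinear]
      bilinear_radd[OF br_bilinear] bilinear_rmul[OF br_bilinear] algebra_simps)

lemma g_nabla_symmetrized: "g (nabla E F + nabla F E) Z = sym_ad Z E F"
proof -
  have "2 * g (nabla E F) Z + 2 * g (nabla F E) Z = 2 * sym_ad Z E F"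
    using koszul[of E F Z] koszul[of F E Z]
      br_antisym[of F E] br_antisym[of E Z] br_antisym[of F Z]
    by (simp add: sym_ad_def bilinear_lneg[OF g_bilinear])
  then show ?thesis
    by (simp add: bilinear_ladd[OF g_bilinear])
qed

lemma sff_eq: "sff g nabla es E F = (1/2) *\<^sub>R (\<Sum>e\<leftarrow>es. (sym_ad e E F / g e e) *\<^sub>R e)"
  unfolding sff_def oproj_def g_nabla_symmetrized ..

lemma sff_eq_0_iff:
  assumes "orthonormal_set g (set es)" "distinct es"
  shows "sff g nabla es E F = 0 \<longleftrightarrow> (\<forall>e\<in>set es. sym_ad e E F = 0)"
  using orthonormal_setD(1)[OF assms(1)]
  by (simp add: sff_eq orthonormal_combination_eq_0_iff[OF g_bilinear assms])

lemma sff_vanishes_on_span_iff: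
  assumes "orthonormal_set g (set es)" "distinct es"
  shows "(\<forall>E\<in>span S. \<forall>F\<in>span S. sff g nabla es E F = 0)
     \<longleftrightarrow> (\<forall>e\<in>set es. \<forall>x\<in>S. \<forall>y\<in>S. sym_ad e x y = 0)"
proof
  assume "\<forall>E\<in>span S. \<forall>F\<in>span S. sff g nabla es E F = 0"
  then show "\<forall>e\<in>set es. \<forall>x\<in>S. \<forall>y\<in>S. sym_ad e x y = 0"
    by (auto simp: sff_eq_0_iff[OF assms] span_base)
next
  assume basis: "\<forall>e\<in>set es. \<forall>x\<in>S. \<forall>y\<in>S. sym_ad e x y = 0"
  have "sym_ad e E F = 0" if "e \<in> set es" "E \<in> span S" "F \<in> span S" for e E F
    using bilinear_eq[OF bilinear_sym_ad bilinear_zero, of "span S" S "span S" S]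
      basis that by auto
  then show "\<forall>E\<in>span S. \<forall>F\<in>span S. sff g nabla es E F = 0"
    by (simp add: sff_eq_0_iff[OF assms])
qed

lemma minimal_folI:
  assumes "\<And>h e. h \<in> set Hs \<Longrightarrow> e \<in> set Vs \<Longrightarrow> sym_ad h e e = 0"
  shows "minimal_fol g nabla Vs Hs"
  using assms unfolding minimal_fol_def sff_eq by (simp cong: map_cong)

end

theorem theorem4p2:
  fixes br :: "'v::real_vector \<Rightarrow> 'v \<Rightarrow> 'v"
    and g :: "'v \<Rightarrow> 'v \<Rightarrow> real"
    and nabla :: "'v \<Rightarrow> 'v \<Rightarrow> 'v"
    and A B C X Y :: 'v
    and b11 b21 c11 c12 c21 c22 :: real
  assumes br_bilinear: "bilinear br"
    and br_antisym: "\<forall>u v. br u v = - br v u"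
    and br_jacobi: "\<forall>u v w. br u (br v w) + br v (br w u) + br w (br u v) = 0"
    and g_bilinear: "bilinear g"
    and g_sym: "\<forall>u v. g u v = g v u"
    and basis_distinct: "distinct [A, B, C, X, Y]"
    and basis_span: "span {A, B, C, X, Y} = UNIV"
    and basis_on: "orthonormal_set g {A, B, C, X, Y}"
    and levi_civita: "\<forall>E F Z. 2 * g (nabla E F) Z = g (br E F) Z - g (br F Z) E + g (br Z E) F"
    and su2_AB: "br A B = 2 *\<^sub>R C"
    and su2_CA: "br C A = 2 *\<^sub>R B"
    and su2_BC: "br B C = 2 *\<^sub>R A"
    and AX: "br A X = - (b11 *\<^sub>R B) - c11 *\<^sub>R C"
    and AY: "br A Y = - (b21 *\<^sub>R B) - c21 *\<^sub>R C"
    and BX: "br B X = b11 *\<^sub>R A - c12 *\<^sub>R C"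
    and BY: "br B Y = b21 *\<^sub>R A - c22 *\<^sub>R C"
    and CX: "br C X = c11 *\<^sub>R A + c12 *\<^sub>R B"
    and CY: "br C Y = c21 *\<^sub>R A + c22 *\<^sub>R B"
    and conformal: "conformal_fol g nabla [A, B, C] [X, Y]"
  shows "semi_riemannian_fol g nabla [A, B, C] [X, Y]
       \<and> minimal_fol g nabla [A, B, C] [X, Y]
       \<and> (totally_geodesic_fol g nabla [A, B, C] [X, Y] \<longleftrightarrow>
            ((g B B - g A A) * b11 = 0 \<and> (g B B - g A A) * b21 = 0
           \<and> (g C C - g A A) * c11 = 0 \<and> (g C C - g A A) * c21 = 0
           \<and> (g C C - g B B) * c12 = 0 \<and> (g C C - g B B) * c22 = 0))"
proof -
  interpret levi_civita_algebra br g nabla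
    using br_bilinear br_antisym g_bilinear levi_civita by unfold_locales blast+
  have on_V: "orthonormal_set g (set [A, B, C])" and on_H: "orthonormal_set g (set [X, Y])"
    using orthonormal_set_subset[OF basis_on] by auto
  have dist_V: "distinct [A, B, C]" and dist_H: "distinct [X, Y]"
    using basis_distinct by auto
  have "A \<noteq> B" "A \<noteq> C" "A \<noteq> X" "A \<noteq> Y" "B \<noteq> C" "B \<noteq> X" "B \<noteq> Y" "C \<noteq> X" "C \<noteq> Y" "X \<noteq> Y"
    using basis_distinct by auto
  note basis_simps = this this[symmetric] orthonormal_setD(2)[OF basis_on]
    AX AY BX BY CX CY br_antisym[of X] br_antisym[of Y] sym_ad_def
    bilinear_ladd[OF g_bilinear] bilinear_lsub[OF g_bilinear] bilinear_lneg[OF g_bilinear]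
    bilinear_lmul[OF g_bilinear]
  have "semi_riemannian_fol g nabla [A, B, C] [X, Y]"
    unfolding semi_riemannian_fol_def sff_vanishes_on_span_iff[OF on_V dist_V]
    by (simp add: basis_simps)
  moreover have "minimal_fol g nabla [A, B, C] [X, Y]"
    by (rule minimal_folI) (auto simp: basis_simps)
  moreover have "totally_geodesic_fol g nabla [A, B, C] [X, Y] \<longleftrightarrow>
            ((g B B - g A A) * b11 = 0 \<and> (g B B - g A A) * b21 = 0
           \<and> (g C C - g A A) * c11 = 0 \<and> (g C C - g A A) * c21 = 0
           \<and> (g C C - g B B) * c12 = 0 \<and> (g C C - g B B) * c22 = 0)"
    unfolding totally_geodesic_fol_def sff_vanishes_on_span_iff[OF on_H dist_H]
    by (simp add: basis_simps algebra_simps) blast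
  ultimately show ?thesis by blast
qed

end
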